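(* Let $n_{\max}$ be a parameter, let $W$ be a (sufficiently large) power-of-two polynomial in $n_{\max}$, and let $h : [U] \to [W]$ be the tabulation weight function defined as follows. Write each key $x \in [U]$ as $x = x_{\mathrm{high}} \cdot W^4 + x_{\mathrm{mid}} \cdot W + x_{\mathrm{low}}$ with $x_{\mathrm{low}} \in [W]$, $x_{\mathrm{mid}} \in [W^3]$, and set $x_{\mathrm{midlow}} = x_{\mathrm{mid}} \cdot W + x_{\mathrm{low}} \in [W^4]$. Let $A_1,\dots,A_{m}$, with $m = \operatorname{poly}(W)$, be independent random arrays of length $W^4$, each of which is the concatenation of $W^3$ independent uniformly random permutations of $[W]$, and let $f : [U/W^4] \to [m]$ be a random function drawn from a pairwise-independent family (independently of the arrays). Define $h(x) = A_{f(x_{\mathrm{high}})}[x_{\mathrm{midlow}}]$. Then for any set $S = \{x_1,\dots,x_n\} \subseteq [U]$ of $n \le n_{\max}$ keys, with probability at least $1 - 1/\operatorname{poly}(n_{\max})$ (over the random choice of the arrays and $f$), the weights $h(x_1),\dots,h(x_n)$ are pairwise distinct.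
   Context: $[k]$ denotes $\{0,1,\dots,k-1\}$. The number $m$ of arrays is a sufficiently large polynomial in $W$, so that two distinct inputs collide under the pairwise-independent $f$ with probability at most $1/\operatorname{poly}(W)$. *)

theory Defs
  imports "HOL-Probability.Probability"
begin

text \<open>Arrays of length W^4 that are the concatenation of W^3 permutations of [W].
  Entries outside [W^4] are fixed (extensional), so the set is finite.\<close>
definition perm_block_arrays :: "nat \<Rightarrow> (nat \<Rightarrow> nat) set" where
  "perm_block_arrays W =
     {a \<in> {..<W^4} \<rightarrow>\<^sub>E {..<W}.
        \<forall>b<W^3. bij_betw (\<lambda>k. a (b * W + k)) {..<W} {..<W}}"

definition random_arrays :: "nat \<Rightarrow> nat \<Rightarrow> (nat \<Rightarrow> nat \<Rightarrow> nat) pmf" where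
  "random_arrays W m = pmf_of_set ({..<m} \<rightarrow>\<^sub>E perm_block_arrays W)"

definition pairwise_indep_family :: "nat set \<Rightarrow> nat \<Rightarrow> (nat \<Rightarrow> nat) pmf \<Rightarrow> bool" where
  "pairwise_indep_family D m F \<longleftrightarrow>
     (\<forall>a\<in>D. \<forall>i<m. measure_pmf.prob F {f. f a = i} = 1 / real m) \<and>
     (\<forall>a\<in>D. \<forall>b\<in>D. a \<noteq> b \<longrightarrow> (\<forall>i<m. \<forall>j<m.
        measure_pmf.prob F {f. f a = i \<and> f b = j} = 1 / (real m)^2))"

definition tab_weight :: "nat \<Rightarrow> (nat \<Rightarrow> nat \<Rightarrow> nat) \<Rightarrow> (nat \<Rightarrow> nat) \<Rightarrow> nat \<Rightarrow> nat" where
  "tab_weight W A f x = A (f (x div W^4)) (x mod W^4)"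

end

theory Submission
  imports Defs "HOL-Number_Theory.Cong"
begin

(* Two distinct keys x and y collide iff the array cells (f(x_high), x_midlow) and
   (f(y_high), y_midlow) hold the same value. If x_high and y_high differ, pairwise
   independence makes f(x_high) = f(y_high) an event of probability 1/m <= 1/W; otherwise
   the two cells are distinct. Two distinct cells of one permutation block never agree.
   For cells in different blocks, rotating the values of the second block by s mod W is a
   bijection of the sample space that adds s to the difference of the two cells mod W, so
   that difference is uniform on [W] and the cells agree with probability exactly 1/W.
   A union bound over the ordered pairs of keys bounds the failure probability by
   2 n (n - 1) / W, which is at most nmax^(-c) once W >= nmax^(c+3); m >= W suffices. *)

lemma mod_add_right_cancel_less:
  fixes u v s W :: nat
  assumes "u < W" "v < W" "(u + s) mod W = (v + s) mod W"
  shows "u = v"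
  using assms cong_add_rcancel_nat[of u s v W] unfolding cong_def by simp

lemma bij_betw_add_mod:
  fixes s W :: nat
  assumes "0 < W"
  shows "bij_betw (\<lambda>v. (v + s) mod W) {..<W} {..<W}"
proof -
  have inj: "inj_on (\<lambda>v. (v + s) mod W) {..<W}"
    by (rule inj_onI) (metis lessThan_iff mod_add_right_cancel_less)
  moreover have "(\<lambda>v. (v + s) mod W) ` {..<W} = {..<W}"
    by (rule endo_inj_surj) (use inj assms in auto)
  ultimately show ?thesis
    by (simp add: bij_betw_def)
qed

lemma card_eq_mult_card_fibre:
  assumes "finite \<Omega>" and "g ` \<Omega> \<subseteq> {..<W}"
    and "\<And>t. t < W \<Longrightarrow> card {x \<in> \<Omega>. g x = t} = card {x \<in> \<Omega>. g x = 0}"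
  shows "card \<Omega> = W * card {x \<in> \<Omega>. g x = 0}"
proof -
  have "card \<Omega> = (\<Sum>t<W. card {x \<in> \<Omega>. g x = t})"
    using sum_fun_comp[of \<Omega> "{..<W}" g "\<lambda>_. 1 :: nat"] assms(1,2) by simp
  also have "\<dots> = (\<Sum>t<W. card {x \<in> \<Omega>. g x = 0})"
    by (intro sum.cong refl assms(3)) simp
  also have "\<dots> = W * card {x \<in> \<Omega>. g x = 0}"
    by simp
  finally show ?thesis .
qed

lemma card_fibres_eq_if_shift:
  fixes g :: "'a \<Rightarrow> nat" and W :: nat
  assumes closed: "\<And>s x. x \<in> \<Omega> \<Longrightarrow> \<rho> s x \<in> \<Omega>"
    and inverse: "\<And>s x. x \<in> \<Omega> \<Longrightarrow> s \<le> W \<Longrightarrow> \<rho> (W - s) (\<rho> s x) = x"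
    and shift: "\<And>s x. g (\<rho> s x) = (g x + s) mod W"
    and "t < W"
  shows "card {x \<in> \<Omega>. g x = t} = card {x \<in> \<Omega>. g x = 0}"
proof -
  have "bij_betw (\<rho> t) {x \<in> \<Omega>. g x = 0} {x \<in> \<Omega>. g x = t}"
  proof (rule bij_betw_byWitness[where f' = "\<rho> (W - t)"])
    show "\<forall>x\<in>{x \<in> \<Omega>. g x = 0}. \<rho> (W - t) (\<rho> t x) = x"
      using \<open>t < W\<close> by (intro ballI inverse) auto
    have "\<rho> t (\<rho> (W - t) x) = x" if "x \<in> \<Omega>" for x
      using inverse[OF that, of "W - t"] \<open>t < W\<close> by simp
    then show "\<forall>x\<in>{x \<in> \<Omega>. g x = t}. \<rho> t (\<rho> (W - t) x) = x"
      by blast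
    show "\<rho> t ` {x \<in> \<Omega>. g x = 0} \<subseteq> {x \<in> \<Omega>. g x = t}"
      using closed shift \<open>t < W\<close> by auto
    show "\<rho> (W - t) ` {x \<in> \<Omega>. g x = t} \<subseteq> {x \<in> \<Omega>. g x = 0}"
      using closed shift \<open>t < W\<close> by auto
  qed
  then show ?thesis
    by (rule bij_betw_same_card[symmetric])
qed

lemma block_offset_less:
  fixes W b k :: nat
  assumes "b < W ^ 3" "k < W"
  shows "b * W + k < W ^ 4"
proof -
  have "b * W + k < Suc b * W"
    using assms(2) by simp
  also have "\<dots> \<le> W ^ 3 * W"
    using assms(1) by (intro mult_right_mono) auto
  finally show ?thesis
    by (simp add: power_Suc2[symmetric] numeral_eq_Suc)
qed

lemma block_index_less:
  fixes W p :: nat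
  assumes "p < W ^ 4"
  shows "p div W < W ^ 3"
  using assms less_mult_imp_div_less[of p "W ^ 3" W]
  by (simp add: power_Suc2[symmetric] numeral_eq_Suc)

lemma perm_block_arrays_PiE: "a \<in> perm_block_arrays W \<Longrightarrow> a \<in> {..<W ^ 4} \<rightarrow>\<^sub>E {..<W}"
  unfolding perm_block_arrays_def by blast

lemma perm_block_arrays_less: "a \<in> perm_block_arrays W \<Longrightarrow> k < W ^ 4 \<Longrightarrow> a k < W"
  using PiE_mem[OF perm_block_arrays_PiE] by blast

lemma perm_block_arrays_bij_block:
  "a \<in> perm_block_arrays W \<Longrightarrow> b < W ^ 3 \<Longrightarrow> bij_betw (\<lambda>k. a (b * W + k)) {..<W} {..<W}"
  unfolding perm_block_arrays_def by blast

lemma perm_block_arrays_eq_same_block: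
  fixes W :: nat
  assumes a: "a \<in> perm_block_arrays W" and p: "p < W ^ 4"
    and block: "p div W = q div W" and eq: "a p = a q"
  shows "p = q"
proof -
  have "inj_on (\<lambda>k. a (p div W * W + k)) {..<W}"
    using perm_block_arrays_bij_block[OF a block_index_less[OF p]] by (rule bij_betw_imp_inj_on)
  moreover have "0 < W"
    using p by (cases W) auto
  moreover have "a (p div W * W + p mod W) = a (p div W * W + q mod W)"
    using eq block by (metis div_mult_mod_eq)
  ultimately have "p mod W = q mod W"
    by (simp add: inj_on_def)
  then show ?thesis
    using block by (metis div_mult_mod_eq)
qed

lemma finite_perm_block_arrays: "finite (perm_block_arrays W)"
proof (rule finite_subset)
  show "perm_block_arrays W \<subseteq> {..<W ^ 4} \<rightarrow>\<^sub>E {..<W}"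
    using perm_block_arrays_PiE by blast
qed (simp add: finite_PiE)

lemma perm_block_arrays_nonempty:
  fixes W :: nat
  assumes "0 < W"
  shows "perm_block_arrays W \<noteq> {}"
proof -
  define a where "a k = (if k < W ^ 4 then k mod W else undefined)" for k
  have "bij_betw (\<lambda>k. a (b * W + k)) {..<W} {..<W}" if "b < W ^ 3" for b
    by (rule bij_betw_cong[THEN iffD1, rotated, OF bij_betw_id])
       (simp add: a_def block_offset_less[OF that])
  moreover have "a \<in> {..<W ^ 4} \<rightarrow>\<^sub>E {..<W}"
    using assms by (auto simp: a_def PiE_iff extensional_def)
  ultimately have "a \<in> perm_block_arrays W"
    unfolding perm_block_arrays_def by blast
  then show ?thesis
    by blast
qed

definition rotate_block :: "nat \<Rightarrow> nat \<Rightarrow> nat \<Rightarrow> (nat \<Rightarrow> nat) \<Rightarrow> nat \<Rightarrow> nat" where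
  "rotate_block W b s a k = (if k < W ^ 4 \<and> k div W = b then (a k + s) mod W else a k)"

lemma rotate_block_in_perm_block_arrays:
  fixes W :: nat
  assumes a: "a \<in> perm_block_arrays W" and "0 < W"
  shows "rotate_block W b s a \<in> perm_block_arrays W"
proof -
  have "rotate_block W b s a \<in> {..<W ^ 4} \<rightarrow>\<^sub>E {..<W}"
    using perm_block_arrays_PiE[OF a] \<open>0 < W\<close>
    by (auto simp: rotate_block_def PiE_iff extensional_def)
  moreover have "bij_betw (\<lambda>k. rotate_block W b s a (b' * W + k)) {..<W} {..<W}"
    if b': "b' < W ^ 3" for b'
  proof -
    have block: "bij_betw (\<lambda>k. a (b' * W + k)) {..<W} {..<W}"
      using a b' by (rule perm_block_arrays_bij_block)
    have offset: "b' * W + k < W ^ 4" "(b' * W + k) div W = b'" if "k < W" for k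
      using block_offset_less[OF b' that] that by simp_all
    show ?thesis
    proof (cases "b' = b")
      case True
      have "bij_betw ((\<lambda>v. (v + s) mod W) \<circ> (\<lambda>k. a (b' * W + k))) {..<W} {..<W}"
        using block bij_betw_add_mod[OF \<open>0 < W\<close>] by (rule bij_betw_trans)
      then show ?thesis
        by (rule bij_betw_cong[THEN iffD1, rotated]) (simp add: rotate_block_def True offset[unfolded True])
    next
      case False
      from block show ?thesis
        by (rule bij_betw_cong[THEN iffD1, rotated]) (simp add: rotate_block_def offset False)
    qed
  qed
  ultimately show ?thesis
    unfolding perm_block_arrays_def by blast
qed

lemma rotate_block_inverse:
  fixes W :: nat
  assumes "a \<in> perm_block_arrays W" "s \<le> W"
  shows "rotate_block W b (W - s) (rotate_block W b s a) = a"
proof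
  fix k
  have "((a k + s) mod W + (W - s)) mod W = a k" if "k < W ^ 4"
  proof -
    have "((a k + s) mod W + (W - s)) mod W = (a k + s + (W - s)) mod W"
      by (rule mod_add_left_eq)
    also have "\<dots> = (a k + W) mod W"
      using \<open>s \<le> W\<close> by simp
    also have "\<dots> = a k"
      using perm_block_arrays_less[OF assms(1) that] by simp
    finally show ?thesis .
  qed
  then show "rotate_block W b (W - s) (rotate_block W b s a) k = a k"
    by (simp add: rotate_block_def)
qed

definition rotate_array_block :: "nat \<Rightarrow> nat \<Rightarrow> nat \<Rightarrow> nat \<Rightarrow> (nat \<Rightarrow> nat \<Rightarrow> nat) \<Rightarrow> nat \<Rightarrow> nat \<Rightarrow> nat" where
  "rotate_array_block W j b s A = A(j := rotate_block W b s (A j))"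

lemma rotate_array_block_in_PiE:
  fixes W :: nat
  assumes "A \<in> {..<m} \<rightarrow>\<^sub>E perm_block_arrays W" "j < m" "0 < W"
  shows "rotate_array_block W j b s A \<in> {..<m} \<rightarrow>\<^sub>E perm_block_arrays W"
proof -
  have "rotate_array_block W j b s A \<in> insert j {..<m} \<rightarrow>\<^sub>E perm_block_arrays W"
    using assms unfolding rotate_array_block_def
    by (intro PiE_fun_upd rotate_block_in_perm_block_arrays) auto
  then show ?thesis
    using \<open>j < m\<close> by (simp add: insert_absorb)
qed

lemma rotate_array_block_inverse:
  fixes W :: nat
  assumes "A \<in> {..<m} \<rightarrow>\<^sub>E perm_block_arrays W" "j < m" "s \<le> W"
  shows "rotate_array_block W j b (W - s) (rotate_array_block W j b s A) = A"
proof -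
  have "A j \<in> perm_block_arrays W"
    using assms by auto
  then show ?thesis
    using \<open>s \<le> W\<close> by (simp add: rotate_array_block_def rotate_block_inverse)
qed

lemma finite_array_families: "finite ({..<m :: nat} \<rightarrow>\<^sub>E perm_block_arrays W)"
  by (intro finite_PiE) (simp_all add: finite_perm_block_arrays)

lemma array_families_nonempty:
  fixes W :: nat
  assumes "0 < W"
  shows "{..<m} \<rightarrow>\<^sub>E perm_block_arrays W \<noteq> {}"
  using perm_block_arrays_nonempty[OF assms] by (simp add: PiE_eq_empty_iff)

lemma prob_random_arrays:
  fixes W :: nat
  assumes "0 < W"
  shows "measure_pmf.prob (random_arrays W m) X
    = card (({..<m} \<rightarrow>\<^sub>E perm_block_arrays W) \<inter> X) / card ({..<m} \<rightarrow>\<^sub>E perm_block_arrays W)"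
  unfolding random_arrays_def
  using array_families_nonempty[OF assms] finite_array_families by (rule measure_pmf_of_set)

lemma prob_random_arrays_same_block_eq:
  fixes W :: nat
  assumes "0 < W" "i < m" "p < W ^ 4" "q < W ^ 4" "p \<noteq> q" "p div W = q div W"
  shows "measure_pmf.prob (random_arrays W m) {A. A i p = A i q} = 0"
proof -
  have "A i p \<noteq> A i q" if "A \<in> {..<m} \<rightarrow>\<^sub>E perm_block_arrays W" for A
    using that assms perm_block_arrays_eq_same_block[of "A i" W p q] by auto
  then have "({..<m} \<rightarrow>\<^sub>E perm_block_arrays W) \<inter> {A. A i p = A i q} = {}"
    by blast
  then show ?thesis
    using prob_random_arrays[OF \<open>0 < W\<close>] by simp
qed

lemma prob_random_arrays_distinct_blocks_eq:
  fixes W :: nat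
  assumes W: "0 < W" and "i < m" and j: "j < m" and p: "p < W ^ 4" and q: "q < W ^ 4"
    and blocks: "(i, p div W) \<noteq> (j, q div W)"
  shows "measure_pmf.prob (random_arrays W m) {A. A i p = A j q} = 1 / real W"
proof -
  define \<Omega> where "\<Omega> = {..<m} \<rightarrow>\<^sub>E perm_block_arrays W"
  \<comment> \<open>the difference (A j q - A i p) mod W, written without truncated subtraction\<close>
  define g where "g A = (A j q + (W - A i p)) mod W" for A :: "nat \<Rightarrow> nat \<Rightarrow> nat"
  define \<rho> where "\<rho> = rotate_array_block W j (q div W)"
  have g_rotate: "g (\<rho> s A) = (g A + s) mod W" for s A
  proof -
    have "\<rho> s A i p = A i p" "\<rho> s A j q = (A j q + s) mod W"
      using blocks q by (auto simp: \<rho>_def rotate_array_block_def rotate_block_def)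
    then have "g (\<rho> s A) = (A j q + s + (W - A i p)) mod W"
      by (simp add: g_def mod_add_left_eq)
    also have "\<dots> = (A j q + (W - A i p) + s) mod W"
      by (simp only: ac_simps)
    also have "\<dots> = (g A + s) mod W"
      unfolding g_def by (rule mod_add_left_eq[symmetric])
    finally show ?thesis .
  qed
  have "card \<Omega> = W * card {A \<in> \<Omega>. g A = 0}"
  proof (rule card_eq_mult_card_fibre)
    show "finite \<Omega>"
      unfolding \<Omega>_def by (rule finite_array_families)
    show "g ` \<Omega> \<subseteq> {..<W}"
      using W by (auto simp: g_def)
    have "\<rho> s A \<in> \<Omega>" if "A \<in> \<Omega>" for s A
      using that unfolding \<Omega>_def \<rho>_def by (rule rotate_array_block_in_PiE[OF _ j W])
    moreover have "\<rho> (W - s) (\<rho> s A) = A" if "A \<in> \<Omega>" "s \<le> W" for s A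
      using that unfolding \<Omega>_def \<rho>_def by (rule rotate_array_block_inverse[OF _ j])
    ultimately show "card {A \<in> \<Omega>. g A = t} = card {A \<in> \<Omega>. g A = 0}" if "t < W" for t
      using g_rotate that by (rule card_fibres_eq_if_shift[where \<rho> = \<rho>])
  qed
  moreover have "\<Omega> \<inter> {A. A i p = A j q} = {A \<in> \<Omega>. g A = 0}"
  proof -
    have "A i p = A j q \<longleftrightarrow> g A = 0" if "A \<in> \<Omega>" for A
    proof -
      have "A i p < W" "A j q < W"
        using that \<open>i < m\<close> j p q perm_block_arrays_less unfolding \<Omega>_def by blast+
      then show ?thesis
        using mod_add_right_cancel_less[of "A j q" W "A i p" "W - A i p"] by (auto simp: g_def)
    qed
    then show ?thesis
      by blast
  qed
  moreover have "card \<Omega> \<noteq> 0"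
    using finite_array_families array_families_nonempty[OF W] by (simp add: \<Omega>_def)
  ultimately show ?thesis
    using prob_random_arrays[OF W] by (simp add: \<Omega>_def[symmetric])
qed

lemma prob_random_arrays_entries_eq_le:
  fixes W :: nat
  assumes "0 < W" "i < m" "j < m" "p < W ^ 4" "q < W ^ 4" "(i, p) \<noteq> (j, q)"
  shows "measure_pmf.prob (random_arrays W m) {A. A i p = A j q} \<le> 1 / real W"
proof (cases "(i, p div W) = (j, q div W)")
  case True
  then show ?thesis
    using assms prob_random_arrays_same_block_eq[of W i m p q] by simp
next
  case False
  then show ?thesis
    using assms prob_random_arrays_distinct_blocks_eq by simp
qed

lemma pairwise_indep_family_prob_out_of_range:
  assumes F: "pairwise_indep_family D m F" and "a \<in> D" "0 < m"
  shows "measure_pmf.prob F {f. m \<le> f a} = 0"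
proof -
  have "measure_pmf.prob F {f. f a < m} = (\<Sum>i<m. measure_pmf.prob F {f. f a = i})"
    by (subst measure_pmf.finite_measure_finite_Union[symmetric])
       (auto simp: disjoint_family_on_def intro!: arg_cong[where f = "measure_pmf.prob F"])
  also have "\<dots> = 1"
    using F assms by (simp add: pairwise_indep_family_def)
  moreover have "{f. m \<le> f a} = space (measure_pmf F) - {f. f a < m}"
    by auto
  ultimately show ?thesis
    using measure_pmf.prob_compl[of "{f. f a < m}" F] by simp
qed

lemma pairwise_indep_family_prob_collision:
  assumes F: "pairwise_indep_family D m F" and "a \<in> D" "c \<in> D" "a \<noteq> c"
  shows "measure_pmf.prob F {f. f a = f c \<and> f a < m} = 1 / real m"
proof -
  have "measure_pmf.prob F {f. f a = f c \<and> f a < m}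
      = (\<Sum>i<m. measure_pmf.prob F {f. f a = i \<and> f c = i})"
    by (subst measure_pmf.finite_measure_finite_Union[symmetric])
       (auto simp: disjoint_family_on_def intro!: arg_cong[where f = "measure_pmf.prob F"])
  also have "\<dots> = real m * (1 / real m ^ 2)"
    using F assms by (simp add: pairwise_indep_family_def)
  also have "\<dots> = 1 / real m"
    by (simp add: power2_eq_square)
  finally show ?thesis .
qed

lemma pairwise_indep_family_prob_not_separated:
  assumes F: "pairwise_indep_family D m F" and "a \<in> D" "c \<in> D" "0 < m"
  shows "measure_pmf.prob F {f. \<not> (f a < m \<and> f c < m \<and> (a \<noteq> c \<longrightarrow> f a \<noteq> f c))} \<le> 1 / real m"
proof -
  let ?P = "measure_pmf.prob F"
  let ?C = "{f. a \<noteq> c \<and> f a = f c \<and> f a < m}"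
  have "?P {f. \<not> (f a < m \<and> f c < m \<and> (a \<noteq> c \<longrightarrow> f a \<noteq> f c))}
      \<le> ?P (?C \<union> {f. m \<le> f a} \<union> {f. m \<le> f c})"
    by (rule measure_pmf.finite_measure_mono) auto
  also have "\<dots> \<le> ?P (?C \<union> {f. m \<le> f a}) + ?P {f. m \<le> f c}"
    by (rule measure_Un_le) simp_all
  also have "\<dots> \<le> ?P ?C + ?P {f. m \<le> f a} + ?P {f. m \<le> f c}"
    using measure_Un_le[of ?C F "{f. m \<le> f a}"] by simp
  also have "\<dots> = ?P ?C"
    using pairwise_indep_family_prob_out_of_range[OF F] assms by simp
  also have "\<dots> \<le> 1 / real m"
    using pairwise_indep_family_prob_collision[OF F \<open>a \<in> D\<close> \<open>c \<in> D\<close>] by (cases "a = c") simp_all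
  finally show ?thesis .
qed

lemma measure_pair_pmf_le:
  fixes R :: "'a pmf" and F :: "'b pmf"
  assumes good: "\<And>f. f \<notin> Bad \<Longrightarrow> measure_pmf.prob R {A. (A, f) \<in> X} \<le> e" and "0 \<le> e"
  shows "measure_pmf.prob (pair_pmf R F) X \<le> e + measure_pmf.prob F Bad"
proof -
  have "pair_pmf R F = bind_pmf F (\<lambda>f. map_pmf (\<lambda>A. (A, f)) R)"
    unfolding pair_pmf_def map_pmf_def by (rule bind_commute_pmf)
  then have "emeasure (pair_pmf R F) X = (\<integral>\<^sup>+f. emeasure R {A. (A, f) \<in> X} \<partial>F)"
    by (simp add: vimage_def)
  also have "\<dots> \<le> (\<integral>\<^sup>+f. (ennreal e + indicator Bad f) \<partial>F)"
  proof (rule nn_integral_mono)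
    fix f
    show "emeasure R {A. (A, f) \<in> X} \<le> ennreal e + indicator Bad f"
    proof (cases "f \<in> Bad")
      case True
      then show ?thesis
        using measure_pmf.emeasure_le_1[of R] by (simp add: add_increasing)
    next
      case False
      then show ?thesis
        using good[OF False] by (simp add: measure_pmf.emeasure_eq_measure ennreal_leI)
    qed
  qed
  also have "\<dots> = ennreal (e + measure_pmf.prob F Bad)"
    using \<open>0 \<le> e\<close>
    by (simp add: nn_integral_add measure_pmf.emeasure_eq_measure ennreal_plus)
  finally have "ennreal (measure_pmf.prob (pair_pmf R F) X) \<le> ennreal (e + measure_pmf.prob F Bad)"
    by (simp only: measure_pmf.emeasure_eq_measure)
  then show ?thesis
    using \<open>0 \<le> e\<close> by (subst (asm) ennreal_le_iff) auto
qed

lemma prob_tab_weight_collision: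
  fixes W :: nat
  assumes W: "0 < W" and "W \<le> m" and F: "pairwise_indep_family D m F"
    and "x div W ^ 4 \<in> D" "y div W ^ 4 \<in> D" "x \<noteq> y"
  shows "measure_pmf.prob (pair_pmf (random_arrays W m) F)
           {(A, f). tab_weight W A f x = tab_weight W A f y} \<le> 2 / real W"
proof -
  define a c where "a = x div W ^ 4" and "c = y div W ^ 4"
  define Bad where "Bad = {f. \<not> (f a < m \<and> f c < m \<and> (a \<noteq> c \<longrightarrow> f a \<noteq> f c))}"
  have cells_differ: "(f a, x mod W ^ 4) \<noteq> (f c, y mod W ^ 4)" if "f \<notin> Bad" for f
    using that \<open>x \<noteq> y\<close> div_mod_decomp[of x "W ^ 4"] div_mod_decomp[of y "W ^ 4"]
    by (auto simp: Bad_def a_def c_def)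
  have "measure_pmf.prob (pair_pmf (random_arrays W m) F)
           {(A, f). tab_weight W A f x = tab_weight W A f y}
      \<le> 1 / real W + measure_pmf.prob F Bad"
  proof (rule measure_pair_pmf_le)
    fix f assume "f \<notin> Bad"
    then show "measure_pmf.prob (random_arrays W m)
        {A. (A, f) \<in> {(A, f). tab_weight W A f x = tab_weight W A f y}} \<le> 1 / real W"
      using prob_random_arrays_entries_eq_le[OF W _ _ _ _ cells_differ] W
      by (simp add: tab_weight_def a_def c_def Bad_def)
  qed simp
  also have "measure_pmf.prob F Bad \<le> 1 / real m"
    unfolding Bad_def a_def c_def
    using pairwise_indep_family_prob_not_separated[OF F] assms by simp
  also have "1 / real m \<le> 1 / real W"
    using W \<open>W \<le> m\<close> by (simp add: frac_le)
  finally show ?thesis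
    by simp
qed

lemma card_off_diagonal:
  assumes "finite S"
  shows "card {(x, y) \<in> S \<times> S. x \<noteq> y} = card S * (card S - 1)"
proof -
  have "{(x, y) \<in> S \<times> S. x \<noteq> y} = S \<times> S - (\<lambda>x. (x, x)) ` S"
    by auto
  moreover have "card (S \<times> S - (\<lambda>x. (x, x)) ` S) = card (S \<times> S) - card ((\<lambda>x. (x, x)) ` S)"
    using assms by (intro card_Diff_subset) auto
  moreover have "card ((\<lambda>x. (x, x)) ` S) = card S"
    by (simp add: card_image inj_on_def)
  ultimately show ?thesis
    by (simp add: card_cartesian_product diff_mult_distrib2)
qed

lemma prob_tab_weight_not_inj:
  fixes W :: nat
  assumes "0 < W" "W \<le> m" and F: "pairwise_indep_family D m F"
    and "finite S" "(\<lambda>x. x div W ^ 4) ` S \<subseteq> D"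
  shows "measure_pmf.prob (pair_pmf (random_arrays W m) F) {(A, f). \<not> inj_on (tab_weight W A f) S}
     \<le> real (card S * (card S - 1)) * (2 / real W)"
proof -
  let ?P = "measure_pmf.prob (pair_pmf (random_arrays W m) F)"
  define Pairs where "Pairs = {(x, y) \<in> S \<times> S. x \<noteq> y}"
  define B where "B = (\<lambda>(x, y). {(A, f). tab_weight W A f x = tab_weight W A f y})"
  have "{(A, f). \<not> inj_on (tab_weight W A f) S} \<subseteq> (\<Union>xy\<in>Pairs. B xy)"
    unfolding inj_on_def Pairs_def B_def by blast
  then have "?P {(A, f). \<not> inj_on (tab_weight W A f) S} \<le> ?P (\<Union>xy\<in>Pairs. B xy)"
    by (rule measure_pmf.finite_measure_mono) simp
  also have "\<dots> \<le> (\<Sum>xy\<in>Pairs. ?P (B xy))"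
    using \<open>finite S\<close>
    by (intro measure_pmf.finite_measure_subadditive_finite finite_subset[of Pairs "S \<times> S"])
       (auto simp: Pairs_def)
  also have "\<dots> \<le> (\<Sum>xy\<in>Pairs. 2 / real W)"
    using assms(5)
    by (intro sum_mono) (auto simp: Pairs_def B_def intro!: prob_tab_weight_collision[OF assms(1,2) F])
  also have "\<dots> = real (card S * (card S - 1)) * (2 / real W)"
    using card_off_diagonal[OF \<open>finite S\<close>] by (simp add: Pairs_def)
  finally show ?thesis .
qed

lemma pairs_collision_bound_le:
  fixes n N c W :: nat
  assumes "n \<le> N" "N ^ (c + 3) \<le> W" "0 < W"
  shows "real (n * (n - 1)) * (2 / real W) \<le> 1 / real N ^ c"
proof (cases "N \<le> 1")
  case True
  then have "n * (n - 1) = 0"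
    using \<open>n \<le> N\<close> by (cases n) auto
  then show ?thesis
    unfolding \<open>n * (n - 1) = 0\<close> by simp
next
  case False
  have "2 * (n * (n - 1)) * N ^ c \<le> 2 * (N * N) * N ^ c"
    using \<open>n \<le> N\<close> by (intro mult_right_mono mult_left_mono mult_mono) auto
  also have "\<dots> \<le> N * (N * N) * N ^ c"
    using False by (intro mult_right_mono) auto
  also have "\<dots> = N ^ (c + 3)"
    by (simp add: power_add numeral_3_eq_3)
  finally have "real (2 * (n * (n - 1)) * N ^ c) \<le> real W"
    using \<open>N ^ (c + 3) \<le> W\<close> by linarith
  then show ?thesis
    using False \<open>0 < W\<close> by (simp add: field_simps)
qed

theorem lemma3p1:
  fixes c :: nat
  shows "\<exists>a b :: nat. \<forall>(nmax::nat) (W::nat) (m::nat) (U::nat) (F :: (nat \<Rightarrow> nat) pmf) (S :: nat set).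
     (\<exists>k. W = 2 ^ k) \<longrightarrow> W \<ge> nmax ^ a \<longrightarrow> m \<ge> W ^ b \<longrightarrow>
     pairwise_indep_family ((\<lambda>x. x div W^4) ` {..<U}) m F \<longrightarrow>
     S \<subseteq> {..<U} \<longrightarrow> card S \<le> nmax \<longrightarrow>
     measure_pmf.prob (pair_pmf (random_arrays W m) F)
        {(A, f). inj_on (tab_weight W A f) S} \<ge> 1 - 1 / real nmax ^ c"
proof (rule exI[of _ "c + 3"], rule exI[of _ 1], intro allI impI)
  fix nmax W m U :: nat and F :: "(nat \<Rightarrow> nat) pmf" and S :: "nat set"
  assume "\<exists>k. W = 2 ^ k" "nmax ^ (c + 3) \<le> W" "W ^ 1 \<le> m"
    and F: "pairwise_indep_family ((\<lambda>x. x div W^4) ` {..<U}) m F"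
    and "S \<subseteq> {..<U}" "card S \<le> nmax"
  then have "0 < W" "finite S"
    by (auto intro: finite_subset)
  let ?P = "measure_pmf.prob (pair_pmf (random_arrays W m) F)"
  have "?P {(A, f). inj_on (tab_weight W A f) S} = 1 - ?P {(A, f). \<not> inj_on (tab_weight W A f) S}"
    using measure_pmf.prob_compl[of "{(A, f). \<not> inj_on (tab_weight W A f) S}"]
    by (simp add: Compl_eq_Diff_UNIV[symmetric] case_prod_unfold Collect_neg_eq[symmetric])
  moreover have "?P {(A, f). \<not> inj_on (tab_weight W A f) S} \<le> real (card S * (card S - 1)) * (2 / real W)"
    using prob_tab_weight_not_inj[OF \<open>0 < W\<close> _ F \<open>finite S\<close>] \<open>W ^ 1 \<le> m\<close> \<open>S \<subseteq> {..<U}\<close> by force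
  moreover have "real (card S * (card S - 1)) * (2 / real W) \<le> 1 / real nmax ^ c"
    using pairs_collision_bound_le \<open>card S \<le> nmax\<close> \<open>nmax ^ (c + 3) \<le> W\<close> \<open>0 < W\<close> by blast
  ultimately show "?P {(A, f). inj_on (tab_weight W A f) S} \<ge> 1 - 1 / real nmax ^ c"
    by linarith
qed

end
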